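(* Let $\theta\in[0,1]$ and $\psi=\frac12-\frac{\theta}{4}$. On the cycle graph $C_5$, let $X$ be the capture time measured in rounds in the tipsy cop and drunken robber game, and let $\mathbb{E}^i[X]$ be its expectation when the game starts with cop and robber at distance $i\in\{1,2\}$ and the robber moving first. Then \[ \mathbb{E}^1[X]=\frac{1-\frac{\theta}{4}}{\left(1-\frac{\theta}{4}\right)(2-\psi)-1},\qquad \mathbb{E}^2[X]=\frac{1}{\left(1-\frac{\theta}{4}\right)(2-\psi)-1}. \]
   Context: Tipsy cop and drunken robber game on a graph: a cop and a robber occupy distinct vertices and alternate moves, the robber moving first; on each move the mover must move to an adjacent vertex (no staying put). The robber always moves to a uniformly random neighbor. The cop, independently at each of her moves, with probability $\theta$ moves to a uniformly random neighbor and with probability $1-\theta$ moves to a neighbor that decreases her distance to the robber (onto the robber if adjacent). All random choices are independent; the robber is captured (game over) as soon as both occupy the same vertex. A round consists of one robber move followed by one cop move; the capture time in rounds is $X=n$ if the capture occurs during the $n$-th round (i.e. at move $2n-1$ or $2n$). *)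

theory Defs
  imports "HOL-Probability.Probability"
begin

definition C5_vert :: "nat set" where
  "C5_vert = {0..<5}"

definition C5_adj :: "nat \<Rightarrow> nat \<Rightarrow> bool" where
  "C5_adj u v \<longleftrightarrow> u < 5 \<and> v < 5 \<and> (v = (u + 1) mod 5 \<or> u = (v + 1) mod 5)"

definition C5_nbrs :: "nat \<Rightarrow> nat set" where
  "C5_nbrs u = {v. C5_adj u v}"

definition C5_dist :: "nat \<Rightarrow> nat \<Rightarrow> nat" where
  "C5_dist u v = min (nat ((int u - int v) mod 5)) (nat ((int v - int u) mod 5))"

text \<open>Game state: Some (cop, robber) while the game runs, None once captured (absorbing).\<close>
type_synonym gstate = "(nat \<times> nat) option"

definition robber_move :: "gstate \<Rightarrow> gstate pmf" where
  "robber_move s = (case s of None \<Rightarrow> return_pmf None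
     | Some (c, r) \<Rightarrow> map_pmf (\<lambda>r'. if r' = c then None else Some (c, r'))
                          (pmf_of_set (C5_nbrs r)))"

definition cop_move :: "real \<Rightarrow> gstate \<Rightarrow> gstate pmf" where
  "cop_move \<theta> s = (case s of None \<Rightarrow> return_pmf None
     | Some (c, r) \<Rightarrow> bind_pmf (bernoulli_pmf \<theta>) (\<lambda>drunk.
          map_pmf (\<lambda>c'. if c' = r then None else Some (c', r))
            (pmf_of_set (if drunk then C5_nbrs c
                         else {c' \<in> C5_nbrs c. C5_dist c' r < C5_dist c r}))))"

definition game_round :: "real \<Rightarrow> gstate \<Rightarrow> gstate pmf" where
  "game_round \<theta> s = bind_pmf (robber_move s) (cop_move \<theta>)"

fun state_after :: "real \<Rightarrow> nat \<Rightarrow> nat \<Rightarrow> nat \<Rightarrow> gstate pmf" where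
  "state_after \<theta> c r 0 = return_pmf (Some (c, r))"
| "state_after \<theta> c r (Suc n) = bind_pmf (state_after \<theta> c r n) (game_round \<theta>)"

definition capture_by :: "real \<Rightarrow> nat \<Rightarrow> nat \<Rightarrow> nat \<Rightarrow> real" where
  "capture_by \<theta> c r n = pmf (state_after \<theta> c r n) None"

definition expected_capture_time :: "real \<Rightarrow> nat \<Rightarrow> nat \<Rightarrow> ennreal" where
  "expected_capture_time \<theta> c r =
     (\<Sum>n. ennreal (real (Suc n)) *
            ennreal (capture_by \<theta> c r (Suc n) - capture_by \<theta> c r n))
     + \<infinity> * ennreal (1 - (SUP n. capture_by \<theta> c r n))"

end

theory Submission
  imports Defs
begin

(* The game is a Markov chain on states (cop, robber) that is absorbed at capture,
   and the law of a round depends only on the cop-robber distance d \<in> {1, 2}.  First-step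
   analysis gives T1 = 1 + (1/2 - \<theta>/4) T1 + \<theta>/4 T2 and T2 = 1 + (1/2 - \<theta>/4) T1 + \<theta>/2 T2
   for the mean capture times, whose solution is the claimed formula.  To identify T with the
   series defining E[X], note that T(distance) is a potential that drops by exactly 1 per round
   in expectation as long as the game runs, so E T(state after n rounds) = T(start) minus the sum
   of P(X > k) for k < n.  Every round captures with probability at least 1/4, hence
   P(X > n) \<le> (3/4)^n, the potential term vanishes, and summation by parts turns the sum of
   the tail probabilities into the sum of n P(X = n). *)

lemma integral_bind_pmf:
  fixes f :: "'b \<Rightarrow> real"
  assumes "\<And>y. \<bar>f y\<bar> \<le> B"
  shows "measure_pmf.expectation (bind_pmf M N) f
           = measure_pmf.expectation M (\<lambda>x. measure_pmf.expectation (N x) f)"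
  unfolding measure_pmf_bind
  by (rule integral_bind[where K = "count_space UNIV" and B = B and B' = 1])
     (auto simp: assms measure_pmf_in_subprob_algebra)

lemma integrable_measure_pmf_bounded:
  fixes f :: "'a \<Rightarrow> real"
  assumes "\<And>x. \<bar>f x\<bar> \<le> B"
  shows "integrable (measure_pmf M) f"
  by (rule measure_pmf.integrable_const_bound[where B = B]) (simp_all add: assms)

lemma integrable_indicator_measure_pmf: "integrable (measure_pmf M) (indicator A :: 'a \<Rightarrow> real)"
  by (rule integrable_measure_pmf_bounded[where B = 1]) (simp split: split_indicator)

lemma geometric_bound_tendsto_zero:
  fixes t :: "nat \<Rightarrow> real"
  assumes t_nonneg: "\<And>n. 0 \<le> t n" and t_le: "\<And>n. t n \<le> q ^ n" and "0 \<le> q" "q < 1"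
  shows "t \<longlonglongrightarrow> 0" and "(\<lambda>n. real n * t n) \<longlonglongrightarrow> 0"
proof -
  have q_lim: "(\<lambda>n. q ^ n) \<longlonglongrightarrow> 0"
    using \<open>0 \<le> q\<close> \<open>q < 1\<close> by (intro LIMSEQ_realpow_zero)
  show "t \<longlonglongrightarrow> 0"
    by (rule real_tendsto_sandwich[OF _ _ tendsto_const q_lim]) (auto simp: t_nonneg t_le)
  have n_q_lim: "(\<lambda>n. real n * q ^ n) \<longlonglongrightarrow> 0"
    using powser_times_n_limit_0[of q] \<open>0 \<le> q\<close> \<open>q < 1\<close> by simp
  show "(\<lambda>n. real n * t n) \<longlonglongrightarrow> 0"
    by (rule real_tendsto_sandwich[OF _ _ tendsto_const n_q_lim])
       (auto simp: t_nonneg t_le mult_left_mono)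
qed

lemma sums_Suc_times_decrement:
  fixes t G :: "nat \<Rightarrow> real"
  assumes G_Suc: "\<And>n. G (Suc n) = G n - t n"
    and G_lim: "G \<longlonglongrightarrow> 0" and n_t_lim: "(\<lambda>n. real n * t n) \<longlonglongrightarrow> 0"
  shows "(\<lambda>n. real (Suc n) * (t n - t (Suc n))) sums G 0"
proof -
  have partial_sums: "(\<Sum>k<n. real (Suc k) * (t k - t (Suc k))) = G 0 - G n - real n * t n" for n
    by (induction n) (simp_all add: G_Suc algebra_simps)
  have "(\<lambda>n. G 0 - G n - real n * t n) \<longlonglongrightarrow> G 0 - 0 - 0"
    by (intro tendsto_diff tendsto_const G_lim n_t_lim)
  then show ?thesis
    unfolding sums_def partial_sums by simp
qed

locale absorbing_chain =
  fixes K :: "'a option \<Rightarrow> 'a option pmf" and V :: "'a set" and p :: real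
    and x\<^sub>0 :: 'a and S :: "nat \<Rightarrow> 'a option pmf"
  assumes K_None: "K None = return_pmf None"
    and K_closed: "\<And>x. x \<in> V \<Longrightarrow> set_pmf (K (Some x)) \<subseteq> insert None (Some ` V)"
    and K_absorbs: "\<And>x. x \<in> V \<Longrightarrow> p \<le> pmf (K (Some x)) None"
    and p_pos: "0 < p"
    and start: "x\<^sub>0 \<in> V" and S_0: "S 0 = return_pmf (Some x\<^sub>0)"
    and S_Suc: "\<And>n. S (Suc n) = bind_pmf (S n) K"
begin

definition survival :: "nat \<Rightarrow> real" where
  "survival n = 1 - pmf (S n) None"

lemma survival_eq_prob: "survival n = measure_pmf.prob (S n) (- {None})"
  using measure_pmf.prob_compl[of "{None}" "S n"]
  by (simp add: survival_def Compl_eq_Diff_UNIV measure_pmf_single)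

lemma survival_nonneg: "0 \<le> survival n"
  by (simp add: survival_def pmf_le_1)

lemma set_pmf_S: "set_pmf (S n) \<subseteq> insert None (Some ` V)"
proof (induction n)
  case 0
  then show ?case using S_0 start by simp
next
  case (Suc n)
  show ?case
  proof
    fix s
    assume "s \<in> set_pmf (S (Suc n))"
    then obtain s' where s': "s' \<in> set_pmf (S n)" "s \<in> set_pmf (K s')"
      by (auto simp: S_Suc)
    with Suc consider "s' = None" | x where "s' = Some x" "x \<in> V" by blast
    then show "s \<in> insert None (Some ` V)"
      by cases (use s' K_closed K_None in auto)
  qed
qed

lemma survival_Suc_le: "survival (Suc n) \<le> (1 - p) * survival n"
proof -
  have integrable_capture: "integrable (measure_pmf (S n)) (\<lambda>s. pmf (K s) None)"
    by (rule integrable_measure_pmf_bounded[where B = 1]) (simp add: pmf_le_1)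
  have integrable_escape: "integrable (measure_pmf (S n)) (\<lambda>s. 1 - pmf (K s) None)"
    by (rule integrable_measure_pmf_bounded[where B = 1]) (simp add: pmf_le_1)
  have "survival (Suc n) = measure_pmf.expectation (S n) (\<lambda>s. 1 - pmf (K s) None)"
    by (simp add: survival_def S_Suc pmf_bind
        Bochner_Integration.integral_diff[OF measure_pmf.integrable_const integrable_capture])
  also have "\<dots> \<le> measure_pmf.expectation (S n) (\<lambda>s. (1 - p) * indicator (- {None}) s)"
  proof (rule integral_mono_AE[OF integrable_escape])
    show "AE s in measure_pmf (S n). 1 - pmf (K s) None \<le> (1 - p) * indicator (- {None}) s"
    proof (rule AE_pmfI)
      fix s
      assume "s \<in> set_pmf (S n)"
      with set_pmf_S consider "s = None" | x where "s = Some x" "x \<in> V" by blast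
      then show "1 - pmf (K s) None \<le> (1 - p) * indicator (- {None}) s"
        by cases (simp_all add: K_None K_absorbs)
    qed
  qed (rule integrable_mult_right[OF integrable_indicator_measure_pmf])
  also have "\<dots> = (1 - p) * survival n"
    by (simp add: survival_eq_prob)
  finally show ?thesis .
qed

lemma p_le_1: "p \<le> 1"
  using K_absorbs[OF start] pmf_le_1[of "K (Some x\<^sub>0)" None] by linarith

lemma survival_le_power: "survival n \<le> (1 - p) ^ n"
proof (induction n)
  case 0
  then show ?case by (simp add: survival_def S_0)
next
  case (Suc n)
  have "survival (Suc n) \<le> (1 - p) * survival n"
    by (rule survival_Suc_le)
  also have "\<dots> \<le> (1 - p) * (1 - p) ^ n"
    using Suc p_le_1 by (intro mult_left_mono) simp_all
  finally show ?case by simp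
qed

lemma survival_tendsto_zero:
  shows "survival \<longlonglongrightarrow> 0" and "(\<lambda>n. real n * survival n) \<longlonglongrightarrow> 0"
  using geometric_bound_tendsto_zero[OF survival_nonneg survival_le_power] p_pos p_le_1
  by simp_all

lemma decseq_survival: "decseq survival"
proof (rule decseq_SucI)
  fix n
  have "0 \<le> p * survival n"
    using p_pos survival_nonneg by simp
  then show "survival (Suc n) \<le> survival n"
    using survival_Suc_le[of n] by (simp add: algebra_simps)
qed

lemma SUP_pmf_absorbed_eq_1: "(SUP n. pmf (S n) None) = 1"
proof -
  have "incseq (\<lambda>n. pmf (S n) None)"
    using decseq_survival by (simp add: incseq_def decseq_def survival_def)
  moreover have "bdd_above (range (\<lambda>n. pmf (S n) None))"
    by (rule bdd_aboveI[where M = 1]) (auto simp: pmf_le_1)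
  ultimately have "(\<lambda>n. pmf (S n) None) \<longlonglongrightarrow> (SUP n. pmf (S n) None)"
    by (rule LIMSEQ_incseq_SUP[rotated])
  moreover have "(\<lambda>n. pmf (S n) None) \<longlonglongrightarrow> 1"
    using tendsto_diff[OF tendsto_const survival_tendsto_zero(1), of 1] by (simp add: survival_def)
  ultimately show ?thesis
    by (rule LIMSEQ_unique)
qed

end

locale absorbing_chain_potential = absorbing_chain +
  fixes g :: "'a option \<Rightarrow> real" and B :: real
  assumes g_None: "g None = 0" and g_nonneg: "\<And>s. 0 \<le> g s" and g_le: "\<And>s. g s \<le> B"
    and g_potential: "\<And>x. x \<in> V \<Longrightarrow> measure_pmf.expectation (K (Some x)) g = g (Some x) - 1"
begin

definition mean_potential :: "nat \<Rightarrow> real" where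
  "mean_potential n = measure_pmf.expectation (S n) g"

lemma integrable_potential: "integrable (measure_pmf M) g"
  by (rule integrable_measure_pmf_bounded[where B = B]) (simp add: g_nonneg g_le)

lemma mean_potential_Suc: "mean_potential (Suc n) = mean_potential n - survival n"
proof -
  have "mean_potential (Suc n)
          = measure_pmf.expectation (S n) (\<lambda>s. measure_pmf.expectation (K s) g)"
    unfolding mean_potential_def S_Suc
    by (rule integral_bind_pmf[where B = B]) (simp add: g_nonneg g_le)
  also have "\<dots> = measure_pmf.expectation (S n) (\<lambda>s. g s - indicator (- {None}) s)"
  proof (rule integral_cong_AE)
    show "AE s in measure_pmf (S n).
            measure_pmf.expectation (K s) g = g s - indicator (- {None}) s"
    proof (rule AE_pmfI)
      fix s
      assume "s \<in> set_pmf (S n)"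
      with set_pmf_S consider "s = None" | x where "s = Some x" "x \<in> V" by blast
      then show "measure_pmf.expectation (K s) g = g s - indicator (- {None}) s"
        by cases (simp_all add: K_None g_None g_potential)
    qed
  qed simp_all
  also have "\<dots> = mean_potential n - survival n"
    using integrable_potential integrable_indicator_measure_pmf
    by (subst Bochner_Integration.integral_diff) (simp_all add: mean_potential_def survival_eq_prob)
  finally show ?thesis .
qed

lemma mean_potential_nonneg: "0 \<le> mean_potential n"
  by (simp add: mean_potential_def g_nonneg)

lemma mean_potential_le: "mean_potential n \<le> B * survival n"
proof -
  have "mean_potential n \<le> measure_pmf.expectation (S n) (\<lambda>s. B * indicator (- {None}) s)"
    unfolding mean_potential_def
    by (rule integral_mono[OF integrable_potential
          integrable_mult_right[OF integrable_indicator_measure_pmf]])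
       (simp add: g_le g_None split: split_indicator)
  also have "\<dots> = B * survival n"
    by (simp only: integral_mult_right_zero integral_indicator) (simp add: survival_eq_prob)
  finally show ?thesis .
qed

lemma mean_potential_tendsto_zero: "mean_potential \<longlonglongrightarrow> 0"
proof (rule real_tendsto_sandwich[OF _ _ tendsto_const])
  show "(\<lambda>n. B * survival n) \<longlonglongrightarrow> 0"
    using tendsto_mult_right_zero[OF survival_tendsto_zero(1)] .
qed (simp_all add: mean_potential_nonneg mean_potential_le)

theorem expected_absorption_time_eq_potential:
  "(\<Sum>n. ennreal (real (Suc n)) * ennreal (pmf (S (Suc n)) None - pmf (S n) None))
     + \<infinity> * ennreal (1 - (SUP n. pmf (S n) None)) = ennreal (g (Some x\<^sub>0))"
proof -
  let ?a = "\<lambda>n. real (Suc n) * (survival n - survival (Suc n))"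
  have sums: "?a sums mean_potential 0"
    using mean_potential_Suc mean_potential_tendsto_zero survival_tendsto_zero(2)
    by (rule sums_Suc_times_decrement)
  have decrement_nonneg: "0 \<le> survival n - survival (Suc n)" for n
    using decseq_survival by (simp add: decseq_Suc_iff)
  have "(\<Sum>n. ennreal (real (Suc n)) * ennreal (pmf (S (Suc n)) None - pmf (S n) None))
          = (\<Sum>n. ennreal (?a n))"
  proof (rule suminf_cong)
    fix n
    have "pmf (S (Suc n)) None - pmf (S n) None = survival n - survival (Suc n)"
      by (simp add: survival_def)
    then show "ennreal (real (Suc n)) * ennreal (pmf (S (Suc n)) None - pmf (S n) None)
                 = ennreal (?a n)"
      by (simp add: ennreal_mult')
  qed
  also have "\<dots> = ennreal (suminf ?a)"
    by (rule suminf_ennreal2[OF mult_nonneg_nonneg[OF _ decrement_nonneg] sums_summable[OF sums]])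
       simp
  also have "suminf ?a = g (Some x\<^sub>0)"
    using sums_unique[OF sums] by (simp add: mean_potential_def S_0)
  finally show ?thesis
    by (simp add: SUP_pmf_absorbed_eq_1)
qed

end

lemma less_5_cases: "(n::nat) < 5 \<longleftrightarrow> n = 0 \<or> n = 1 \<or> n = 2 \<or> n = 3 \<or> n = 4"
  by auto

lemma C5_nbrs_simps:
  "C5_nbrs 0 = {1, 4}" "C5_nbrs (Suc 0) = {0, 2}" "C5_nbrs 2 = {1, 3}" "C5_nbrs 3 = {2, 4}"
  "C5_nbrs 4 = {0, 3}"
  by (auto simp: C5_nbrs_def C5_adj_def less_5_cases)

lemma C5_nbrs_less: "v \<in> C5_nbrs u \<Longrightarrow> v < 5"
  by (simp add: C5_nbrs_def C5_adj_def)

lemma finite_C5_nbrs: "finite (C5_nbrs u)"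
  using C5_nbrs_less by (auto intro: finite_subset[of _ "{..<5}"])

lemma C5_nbrs_nonempty: "u < 5 \<Longrightarrow> C5_nbrs u \<noteq> {}"
  by (auto simp: less_5_cases C5_nbrs_simps)

lemma card_C5_nbrs: "u < 5 \<Longrightarrow> card (C5_nbrs u) = 2"
  unfolding less_5_cases by (elim disjE) (simp_all add: C5_nbrs_simps)

lemma C5_dist_le_2: "C5_dist u v \<le> 2"
  unfolding C5_dist_def min_le_iff_disj nat_le_iff by presburger

lemma C5_dist_eq_0_iff: "u < 5 \<Longrightarrow> v < 5 \<Longrightarrow> C5_dist u v = 0 \<longleftrightarrow> u = v"
  unfolding less_5_cases by (elim disjE) (simp_all add: C5_dist_def)

definition C5_step_toward :: "nat \<Rightarrow> nat \<Rightarrow> nat" where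
  "C5_step_toward u v = (if (v + 5 - u) mod 5 \<le> 2 then (u + 1) mod 5 else (u + 4) mod 5)"

lemma C5_step_toward_less: "C5_step_toward u v < 5"
  by (simp add: C5_step_toward_def)

lemma C5_closer_nbrs:
  assumes "u < 5" "v < 5" "u \<noteq> v"
  shows "{w \<in> C5_nbrs u. C5_dist w v < C5_dist u v} = {C5_step_toward u v}"
  using assms unfolding less_5_cases
  by (elim disjE) (auto simp: C5_nbrs_simps C5_dist_def C5_step_toward_def)

definition game_state :: "nat \<Rightarrow> nat \<Rightarrow> gstate" where
  "game_state c r = (if c = r then None else Some (c, r))"

definition live_states :: "(nat \<times> nat) set" where
  "live_states = {(c, r). c < 5 \<and> r < 5 \<and> c \<noteq> r}"

lemma game_state_in_live_states:
  "c < 5 \<Longrightarrow> r < 5 \<Longrightarrow> game_state c r \<in> insert None (Some ` live_states)"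
  by (auto simp: game_state_def live_states_def)

definition state_dist :: "gstate \<Rightarrow> nat" where
  "state_dist s = (case s of None \<Rightarrow> 0 | Some (c, r) \<Rightarrow> C5_dist c r)"

lemma robber_move_Some:
  "robber_move (Some (c, r)) = map_pmf (\<lambda>r'. game_state c r') (pmf_of_set (C5_nbrs r))"
  unfolding robber_move_def game_state_def by (auto intro!: map_pmf_cong)

lemma cop_move_Some:
  assumes "c < 5" "r < 5" "c \<noteq> r"
  shows "cop_move \<theta> (Some (c, r)) = bind_pmf (bernoulli_pmf \<theta>) (\<lambda>drunk.
           if drunk then map_pmf (\<lambda>c'. game_state c' r) (pmf_of_set (C5_nbrs c))
           else return_pmf (game_state (C5_step_toward c r) r))"
proof -
  have "(\<lambda>c'. if c' = r then None else Some (c', r)) = (\<lambda>c'. game_state c' r)"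
    by (auto simp: game_state_def)
  then show ?thesis
    unfolding cop_move_def option.case prod.case C5_closer_nbrs[OF assms]
    by (intro bind_pmf_cong refl) (simp add: pmf_of_set_singleton)
qed

lemma set_pmf_cop_move:
  assumes "c < 5" "r < 5" "c \<noteq> r"
  shows "set_pmf (cop_move \<theta> (Some (c, r)))
           \<subseteq> (\<lambda>c'. game_state c' r) ` insert (C5_step_toward c r) (C5_nbrs c)"
  unfolding cop_move_Some[OF assms]
  by (auto simp: finite_C5_nbrs C5_nbrs_nonempty assms(1) split: if_splits)

lemma set_pmf_game_round:
  assumes "c < 5" "r < 5" "c \<noteq> r"
  shows "set_pmf (game_round \<theta> (Some (c, r))) \<subseteq> insert None (Some ` live_states)"
proof
  fix s
  assume "s \<in> set_pmf (game_round \<theta> (Some (c, r)))"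
  then obtain r' where r': "r' \<in> C5_nbrs r" "s \<in> set_pmf (cop_move \<theta> (game_state c r'))"
    using assms by (auto simp: game_round_def robber_move_Some finite_C5_nbrs C5_nbrs_nonempty)
  have "r' < 5"
    using r'(1) by (rule C5_nbrs_less)
  show "s \<in> insert None (Some ` live_states)"
  proof (cases "r' = c")
    case True
    then show ?thesis
      using r'(2) by (simp add: game_state_def cop_move_def)
  next
    case False
    then have "s \<in> set_pmf (cop_move \<theta> (Some (c, r')))"
      using r'(2) by (simp add: game_state_def)
    then obtain c' where "c' \<in> insert (C5_step_toward c r') (C5_nbrs c)" "s = game_state c' r'"
      using set_pmf_cop_move[OF assms(1) \<open>r' < 5\<close> False[symmetric]] by blast
    moreover from this(1) have "c' < 5"
      by (auto simp: C5_step_toward_less dest: C5_nbrs_less)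
    ultimately show ?thesis
      using \<open>r' < 5\<close> game_state_in_live_states by simp
  qed
qed

lemma expectation_robber_move:
  fixes h :: "gstate \<Rightarrow> real"
  assumes "r < 5"
  shows "measure_pmf.expectation (robber_move (Some (c, r))) h
           = (\<Sum>r'\<in>C5_nbrs r. h (game_state c r')) / 2"
  using assms
  by (simp add: robber_move_Some integral_pmf_of_set finite_C5_nbrs C5_nbrs_nonempty card_C5_nbrs)

lemma expectation_cop_move:
  fixes h :: "gstate \<Rightarrow> real"
  assumes "0 \<le> \<theta>" "\<theta> \<le> 1" "c < 5" "r < 5" "c \<noteq> r" and h_bound: "\<And>s. \<bar>h s\<bar> \<le> B"
  shows "measure_pmf.expectation (cop_move \<theta> (Some (c, r))) h
           = \<theta> * (\<Sum>c'\<in>C5_nbrs c. h (game_state c' r)) / 2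
             + (1 - \<theta>) * h (game_state (C5_step_toward c r) r)"
proof -
  have "measure_pmf.expectation (cop_move \<theta> (Some (c, r))) h
          = measure_pmf.expectation (bernoulli_pmf \<theta>) (\<lambda>drunk. measure_pmf.expectation
              (if drunk then map_pmf (\<lambda>c'. game_state c' r) (pmf_of_set (C5_nbrs c))
               else return_pmf (game_state (C5_step_toward c r) r)) h)"
    unfolding cop_move_Some[OF assms(3-5)] by (rule integral_bind_pmf[OF h_bound])
  then show ?thesis
    using assms
    by (simp add: integral_pmf_of_set finite_C5_nbrs C5_nbrs_nonempty card_C5_nbrs)
qed

lemma expectation_game_round:
  fixes h :: "gstate \<Rightarrow> real"
  assumes "0 \<le> \<theta>" "\<theta> \<le> 1" "c < 5" "r < 5" "c \<noteq> r" and h_bound: "\<And>s. \<bar>h s\<bar> \<le> B"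
  shows "measure_pmf.expectation (game_round \<theta> (Some (c, r))) h
           = (\<Sum>r'\<in>C5_nbrs r. if r' = c then h None
                else \<theta> * (\<Sum>c'\<in>C5_nbrs c. h (game_state c' r')) / 2
                     + (1 - \<theta>) * h (game_state (C5_step_toward c r') r')) / 2"
proof -
  have "measure_pmf.expectation (game_round \<theta> (Some (c, r))) h
          = (\<Sum>r'\<in>C5_nbrs r. measure_pmf.expectation (cop_move \<theta> (game_state c r')) h) / 2"
    unfolding game_round_def integral_bind_pmf[OF h_bound] expectation_robber_move[OF assms(4)] ..
  also have "\<dots> = (\<Sum>r'\<in>C5_nbrs r. if r' = c then h None
                else \<theta> * (\<Sum>c'\<in>C5_nbrs c. h (game_state c' r')) / 2
                     + (1 - \<theta>) * h (game_state (C5_step_toward c r') r')) / 2"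
  proof (intro arg_cong[where f = "\<lambda>x. x / 2"] sum.cong refl)
    fix r'
    assume "r' \<in> C5_nbrs r"
    then have "r' < 5"
      by (rule C5_nbrs_less)
    show "measure_pmf.expectation (cop_move \<theta> (game_state c r')) h
            = (if r' = c then h None
               else \<theta> * (\<Sum>c'\<in>C5_nbrs c. h (game_state c' r')) / 2
                    + (1 - \<theta>) * h (game_state (C5_step_toward c r') r'))"
    proof (cases "r' = c")
      case True
      then show ?thesis by (simp add: game_state_def cop_move_def)
    next
      case False
      then have "game_state c r' = Some (c, r')"
        by (simp add: game_state_def)
      with False show ?thesis
        using expectation_cop_move[OF assms(1-3) \<open>r' < 5\<close> _ h_bound] by simp
    qed
  qed
  finally show ?thesis .
qed

lemma expectation_game_round_state_dist:
  fixes f :: "nat \<Rightarrow> real"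
  assumes "0 \<le> \<theta>" "\<theta> \<le> 1" "c < 5" "r < 5" "c \<noteq> r"
  shows "measure_pmf.expectation (game_round \<theta> (Some (c, r))) (\<lambda>s. f (state_dist s))
           = (if C5_dist c r = 1 then 1/2 * f 0 + (1/2 - \<theta>/4) * f 1 + \<theta>/4 * f 2
              else (1/2 - \<theta>/4) * f 0 + (1/2 - \<theta>/4) * f 1 + \<theta>/2 * f 2)"
proof -
  have bound: "\<bar>f (state_dist s)\<bar> \<le> \<bar>f 0\<bar> + \<bar>f 1\<bar> + \<bar>f 2\<bar>" for s
  proof -
    have "state_dist s \<le> 2"
      by (auto simp: state_dist_def C5_dist_le_2 split: option.split)
    then show ?thesis
      by (auto simp: le_Suc_eq numeral_2_eq_2)
  qed
  show ?thesis
    using assms(3-5) unfolding expectation_game_round[OF assms bound] less_5_cases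
    by (elim disjE)
       (simp_all add: C5_nbrs_simps game_state_def state_dist_def C5_dist_def
          C5_step_toward_def field_simps)
qed

lemma pmf_game_round_capture_ge:
  assumes "0 \<le> \<theta>" "\<theta> \<le> 1" "c < 5" "r < 5" "c \<noteq> r"
  shows "1/4 \<le> pmf (game_round \<theta> (Some (c, r))) None"
proof -
  let ?M = "game_round \<theta> (Some (c, r))"
  have "pmf ?M None = measure_pmf.expectation ?M (indicator {None})"
    by (simp add: measure_pmf_single)
  also have "\<dots> = measure_pmf.expectation ?M (\<lambda>s. if state_dist s = 0 then 1 else 0)"
  proof (rule integral_cong_AE)
    show "AE s in measure_pmf ?M. indicator {None} s = (if state_dist s = 0 then 1 else 0 :: real)"
    proof (rule AE_pmfI)
      fix s
      assume "s \<in> set_pmf ?M"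
      with set_pmf_game_round[OF assms(3-5), of \<theta>] have "s \<in> insert None (Some ` live_states)"
        by blast
      then consider "s = None" | x y where "s = Some (x, y)" "x < 5" "y < 5" "x \<noteq> y"
        by (auto simp: live_states_def)
      then show "indicator {None} s = (if state_dist s = 0 then 1 else 0 :: real)"
        by cases (simp_all add: state_dist_def C5_dist_eq_0_iff)
    qed
  qed simp_all
  also have "\<dots> = (if C5_dist c r = 1 then 1/2 else 1/2 - \<theta>/4)"
    using expectation_game_round_state_dist[OF assms, of "\<lambda>d. if d = 0 then 1 else 0"] by simp
  finally show ?thesis
    using assms(2) by simp
qed

definition C5_capture_denom :: "real \<Rightarrow> real" where
  "C5_capture_denom \<theta> = (1 - \<theta>/4) * (2 - (1/2 - \<theta>/4)) - 1"

definition C5_capture_time :: "real \<Rightarrow> nat \<Rightarrow> real" where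
  "C5_capture_time \<theta> d =
     (if d = 0 then 0
      else if d = 1 then (1 - \<theta>/4) / C5_capture_denom \<theta>
      else 1 / C5_capture_denom \<theta>)"

lemma C5_capture_denom_pos:
  assumes "0 \<le> \<theta>" "\<theta> \<le> 1"
  shows "0 < C5_capture_denom \<theta>"
proof -
  have "\<theta> * \<theta> \<le> 1"
    using assms mult_le_one by blast
  then show ?thesis
    using assms by (simp add: C5_capture_denom_def algebra_simps)
qed

lemma C5_capture_time_bounds:
  assumes "0 \<le> \<theta>" "\<theta> \<le> 1"
  shows "0 \<le> C5_capture_time \<theta> d" "C5_capture_time \<theta> d \<le> 1 / C5_capture_denom \<theta>"
  using C5_capture_denom_pos[OF assms] assms
  by (auto simp: C5_capture_time_def divide_right_mono)

lemma expectation_game_round_capture_time: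
  assumes "0 \<le> \<theta>" "\<theta> \<le> 1" "c < 5" "r < 5" "c \<noteq> r"
  shows "measure_pmf.expectation (game_round \<theta> (Some (c, r)))
           (\<lambda>s. C5_capture_time \<theta> (state_dist s)) = C5_capture_time \<theta> (C5_dist c r) - 1"
proof -
  have "C5_dist c r = 1 \<or> C5_dist c r = 2"
    using C5_dist_le_2[of c r] C5_dist_eq_0_iff[OF assms(3,4)] assms(5) by linarith
  then show ?thesis
    using C5_capture_denom_pos[OF assms(1,2)]
    unfolding expectation_game_round_state_dist[OF assms]
    by (auto simp: C5_capture_time_def field_simps) (auto simp: C5_capture_denom_def algebra_simps)
qed

lemma expected_capture_time_eq_C5_capture_time:
  assumes "0 \<le> \<theta>" "\<theta> \<le> 1" "c < 5" "r < 5" "c \<noteq> r"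
  shows "expected_capture_time \<theta> c r = ennreal (C5_capture_time \<theta> (C5_dist c r))"
proof -
  interpret absorbing_chain_potential "game_round \<theta>" live_states "1/4" "(c, r)"
    "state_after \<theta> c r" "\<lambda>s. C5_capture_time \<theta> (state_dist s)" "1 / C5_capture_denom \<theta>"
  proof
    show "game_round \<theta> None = return_pmf None"
      by (simp add: game_round_def robber_move_def cop_move_def bind_return_pmf)
    show "C5_capture_time \<theta> (state_dist None) = 0"
      by (simp add: state_dist_def C5_capture_time_def)
  qed (use assms set_pmf_game_round pmf_game_round_capture_ge C5_capture_time_bounds
         expectation_game_round_capture_time in \<open>auto simp: live_states_def state_dist_def\<close>)
  show ?thesis
    using expected_absorption_time_eq_potential
    by (simp add: expected_capture_time_def capture_by_def state_dist_def)
qed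

theorem mainTheorem10:
  fixes \<theta> \<psi> :: real
  assumes "0 \<le> \<theta>" and "\<theta> \<le> 1"
    and "\<psi> = 1/2 - \<theta>/4"
  shows "(\<forall>c\<in>C5_vert. \<forall>r\<in>C5_vert. C5_dist c r = 1 \<longrightarrow>
            expected_capture_time \<theta> c r
              = ennreal ((1 - \<theta>/4) / ((1 - \<theta>/4) * (2 - \<psi>) - 1)))
       \<and> (\<forall>c\<in>C5_vert. \<forall>r\<in>C5_vert. C5_dist c r = 2 \<longrightarrow>
            expected_capture_time \<theta> c r
              = ennreal (1 / ((1 - \<theta>/4) * (2 - \<psi>) - 1)))"
proof -
  have "expected_capture_time \<theta> c r = ennreal (C5_capture_time \<theta> (C5_dist c r))"
    if "c \<in> C5_vert" "r \<in> C5_vert" "C5_dist c r \<noteq> 0" for c r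
    using that expected_capture_time_eq_C5_capture_time[OF assms(1,2)] C5_dist_eq_0_iff
    by (auto simp: C5_vert_def)
  then show ?thesis
    by (auto simp: C5_capture_time_def C5_capture_denom_def assms(3))
qed

end
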